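(* Let $n\geq 3$ be odd and $v=2(n+1)$. Then a $(K_2,K_{1,n})$-$URD(v;1,s)$ exists.
   Context: For graphs $H_1,H_2$, an $(H_1,H_2)$-$URD(v;r,s)$ is a decomposition of the edge set of the complete graph $K_v$ into edge-disjoint subgraphs (blocks), where the blocks are partitioned into $r+s$ classes, each class being a spanning collection of vertex-disjoint blocks (every vertex of $K_v$ lies in exactly one block of the class), such that $r$ classes consist only of copies of $H_1$ and $s$ classes consist only of copies of $H_2$. Here $K_2$ is a single edge and $K_{1,n}$ is the star with $n$ edges. *)

theory Defs
  imports Main
begin

type_synonym 'a graph = "'a set \<times> 'a set set"

definition pair_edges :: "'a set \<Rightarrow> 'a set set" where
  "pair_edges V = {e. e \<subseteq> V \<and> card e = 2}"

definition is_graph :: "'a graph \<Rightarrow> bool" where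
  "is_graph G \<longleftrightarrow> snd G \<subseteq> pair_edges (fst G)"

definition graph_iso :: "'a graph \<Rightarrow> 'b graph \<Rightarrow> bool" where
  "graph_iso G H \<longleftrightarrow> (\<exists>f. bij_betw f (fst G) (fst H) \<and> (\<lambda>e. f ` e) ` snd G = snd H)"

definition complete_graph :: "nat \<Rightarrow> nat graph" where
  "complete_graph v = ({..<v}, pair_edges {..<v})"

definition K2 :: "nat graph" where
  "K2 = ({0, 1}, {{0, 1}})"

definition star :: "nat \<Rightarrow> nat graph" where
  "star n = ({0..n}, {{0, i} | i. i \<in> {1..n}})"

definition URD :: "'b graph \<Rightarrow> 'c graph \<Rightarrow> nat \<Rightarrow> nat \<Rightarrow> nat \<Rightarrow> bool" where
  "URD H1 H2 v r s \<longleftrightarrow>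
     (\<exists>C :: nat \<Rightarrow> nat graph set.
        (\<forall>i<r+s. \<forall>B\<in>C i. is_graph B \<and> fst B \<subseteq> {..<v}) \<and>
        (\<forall>i<r+s. \<forall>x<v. \<exists>!B. B \<in> C i \<and> x \<in> fst B) \<and>
        (\<forall>i<r. \<forall>B\<in>C i. graph_iso B H1) \<and>
        (\<forall>i. r \<le> i \<and> i < r+s \<longrightarrow> (\<forall>B\<in>C i. graph_iso B H2)) \<and>
        (\<forall>e\<in>snd (complete_graph v). \<exists>!p. fst p < r+s \<and> snd p \<in> C (fst p) \<and> e \<in> snd (snd p)))"

end

theory Submission
  imports Defs
begin

(* Take the vertices to be Z_{2m} with m = n + 1. The m diameters {i, i + m} form the
   single K_2 class. Orient every other pair from c to c + d with 0 < d < m (mod 2m): this is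
   a tournament on the non-antipodal pairs in which every vertex has out-degree m - 1. The
   closed out-neighbourhoods of two antipodal vertices j and j + m are complementary, so
   their out-stars K_{1,m-1} form a resolution class, and the m antipodal pairs give m
   classes covering every non-diameter edge exactly once. *)

lemma graph_iso_K2:
  assumes "a \<noteq> b"
  shows "graph_iso ({a, b}, {{a, b}}) K2"
proof -
  define f where "f x = (if x = a then 0 else 1 :: nat)" for x
  have "bij_betw f {a, b} {0, 1}"
    using assms unfolding bij_betw_def f_def by auto
  moreover have "(\<lambda>e. f ` e) ` {{a, b}} = {{0, 1}}"
    using assms unfolding f_def by auto
  ultimately show ?thesis
    unfolding graph_iso_def K2_def by auto
qed

lemma graph_iso_star:
  assumes "finite L" "c \<notin> L" "card L = n"
  shows "graph_iso (insert c L, (\<lambda>w. {c, w}) ` L) (star n)"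
proof -
  obtain g where g: "bij_betw g L {1..n}"
    using assms(1,3) finite_same_card_bij by (metis card_atLeastAtMost diff_Suc_1 finite_atLeastAtMost)
  define f where "f x = (if x = c then 0 else g x)" for x
  have "f x = g x" if "x \<in> L" for x
    using that assms(2) by (auto simp: f_def)
  then have fL: "bij_betw f L {1..n}"
    using g bij_betw_cong by blast
  then have "bij_betw f (L \<union> {c}) ({1..n} \<union> {f c})"
    using assms(2) by (intro notIn_Un_bij_betw) (auto simp: f_def)
  moreover have "{1..n} \<union> {f c} = {0..n}"
    by (auto simp: f_def)
  ultimately have f: "bij_betw f (insert c L) {0..n}"
    by simp
  have "(\<lambda>e. f ` e) ` (\<lambda>w. {c, w}) ` L = (\<lambda>i. {0, i}) ` f ` L"
    using assms(2) by (auto simp: f_def image_image intro!: image_cong)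
  also have "\<dots> = snd (star n)"
    using fL unfolding star_def bij_betw_def by auto
  finally show ?thesis
    using f unfolding graph_iso_def star_def by auto
qed

definition cyclic_successors :: "nat \<Rightarrow> nat \<Rightarrow> nat set" where
  "cyclic_successors m c = (\<lambda>d. (c + d) mod (2 * m)) ` {1..<m}"

definition out_star :: "nat \<Rightarrow> nat \<Rightarrow> nat graph" where
  "out_star m c = (insert c (cyclic_successors m c), (\<lambda>w. {c, w}) ` cyclic_successors m c)"

definition diameter :: "nat \<Rightarrow> nat \<Rightarrow> nat graph" where
  "diameter m i = ({i, m + i}, {{i, m + i}})"

definition cyclic_class :: "nat \<Rightarrow> nat \<Rightarrow> nat graph set" where
  "cyclic_class m k =
     (if k = 0 then diameter m ` {..<m} else {out_star m (k - 1), out_star m (m + k - 1)})"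

lemma mem_cyclic_successors:
  assumes "c < 2 * m"
  shows "w \<in> cyclic_successors m c \<longleftrightarrow> w < 2 * m \<and> (c < w \<and> w < c + m \<or> w + m < c)"
proof
  assume "w \<in> cyclic_successors m c"
  then obtain d where "d \<in> {1..<m}" "w = (c + d) mod (2 * m)"
    unfolding cyclic_successors_def by blast
  then show "w < 2 * m \<and> (c < w \<and> w < c + m \<or> w + m < c)"
    using assms by (cases "c + d < 2 * m") (auto simp: le_mod_geq)
next
  assume w: "w < 2 * m \<and> (c < w \<and> w < c + m \<or> w + m < c)"
  define d where "d = (if c < w then w - c else w + 2 * m - c)"
  have "d \<in> {1..<m}" "w = (c + d) mod (2 * m)"
    using w assms by (auto simp: d_def le_mod_geq)
  then show "w \<in> cyclic_successors m c"
    unfolding cyclic_successors_def by blast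
qed

lemma card_cyclic_successors:
  assumes "c < 2 * m"
  shows "card (cyclic_successors m c) = m - 1"
proof -
  have "inj_on (\<lambda>d. (c + d) mod (2 * m)) {1..<m}"
  proof (rule inj_onI)
    fix d d' assume "d \<in> {1..<m}" "d' \<in> {1..<m}" "(c + d) mod (2 * m) = (c + d') mod (2 * m)"
    then show "d = d'"
      using assms by (cases "c + d < 2 * m"; cases "c + d' < 2 * m") (auto simp: le_mod_geq)
  qed
  then show ?thesis
    unfolding cyclic_successors_def by (simp add: card_image)
qed

lemma cyclic_successor_not_antipodal:
  assumes "c < 2 * m" "w \<in> cyclic_successors m c"
  shows "w < 2 * m" "w \<noteq> c" "w \<noteq> c + m" "c \<noteq> w + m"
  using assms by (auto simp: mem_cyclic_successors)

lemma cyclic_successors_asym: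
  assumes "a < 2 * m" "b < 2 * m" "b \<in> cyclic_successors m a"
  shows "a \<notin> cyclic_successors m b"
  using assms by (auto simp: mem_cyclic_successors)

lemma cyclic_successors_total:
  assumes "a < 2 * m" "b < 2 * m" "a \<noteq> b" "b \<noteq> a + m" "a \<noteq> b + m"
  shows "b \<in> cyclic_successors m a \<or> a \<in> cyclic_successors m b"
  using assms by (auto simp: mem_cyclic_successors)

lemma antipodal_out_stars_partition:
  assumes "j < m" "x < 2 * m"
  shows "x \<in> fst (out_star m j) \<longleftrightarrow> x \<notin> fst (out_star m (m + j))"
  using assms by (auto simp: out_star_def mem_cyclic_successors)

lemma mod_eq_iff_antipodal:
  fixes c j m :: nat
  assumes "j < m" "c < 2 * m"
  shows "c mod m = j \<longleftrightarrow> c = j \<or> c = m + j"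
proof (cases "c < m")
  case False
  then have "c mod m = c - m"
    using assms(2) by (simp add: le_mod_geq less_diff_conv2)
  then show ?thesis
    using False assms(1) by auto
qed (use assms in auto)

lemma mem_cyclic_class:
  assumes "k < 1 + m"
  shows "B \<in> cyclic_class m k \<longleftrightarrow>
    (k = 0 \<and> (\<exists>i<m. B = diameter m i)) \<or> (\<exists>c<2 * m. k = Suc (c mod m) \<and> B = out_star m c)"
proof (cases k)
  case 0
  then show ?thesis
    by (auto simp: cyclic_class_def)
next
  case (Suc j)
  have j: "j < m"
    using assms Suc by simp
  have "(\<exists>c<2 * m. k = Suc (c mod m) \<and> B = out_star m c) \<longleftrightarrow>
      B = out_star m j \<or> B = out_star m (m + j)"
  proof
    assume "\<exists>c<2 * m. k = Suc (c mod m) \<and> B = out_star m c"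
    then obtain c where c: "c < 2 * m" "c mod m = j" "B = out_star m c"
      using Suc by auto
    then have "c = j \<or> c = m + j"
      using mod_eq_iff_antipodal[OF j c(1)] by simp
    then show "B = out_star m j \<or> B = out_star m (m + j)"
      using c(3) by blast
  next
    assume "B = out_star m j \<or> B = out_star m (m + j)"
    then show "\<exists>c<2 * m. k = Suc (c mod m) \<and> B = out_star m c"
    proof
      assume "B = out_star m j"
      then show ?thesis
        using j Suc by (intro exI[of _ j]) simp
    next
      assume "B = out_star m (m + j)"
      then show ?thesis
        using j Suc by (intro exI[of _ "m + j"]) simp
    qed
  qed
  then show ?thesis
    using Suc by (simp add: cyclic_class_def)
qed

lemma out_star_subgraph:
  assumes "c < 2 * m"
  shows "is_graph (out_star m c)" "fst (out_star m c) \<subseteq> {..<2 * m}"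
proof -
  have "card {c, w} = 2" if "w \<in> cyclic_successors m c" for w
    using cyclic_successor_not_antipodal(2)[OF assms that] by simp
  then show "is_graph (out_star m c)" "fst (out_star m c) \<subseteq> {..<2 * m}"
    using assms cyclic_successor_not_antipodal(1)[OF assms]
    by (auto simp: out_star_def is_graph_def pair_edges_def)
qed

lemma diameter_subgraph:
  assumes "i < m"
  shows "is_graph (diameter m i)" "fst (diameter m i) \<subseteq> {..<2 * m}"
  using assms by (auto simp: diameter_def is_graph_def pair_edges_def)

lemma graph_iso_out_star:
  assumes "c < 2 * m"
  shows "graph_iso (out_star m c) (star (m - 1))"
proof (unfold out_star_def, rule graph_iso_star)
  show "finite (cyclic_successors m c)"
    by (simp add: cyclic_successors_def)
qed (use cyclic_successor_not_antipodal(2)[OF assms] card_cyclic_successors[OF assms] in auto)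

lemma graph_iso_diameter:
  assumes "i < m"
  shows "graph_iso (diameter m i) K2"
  unfolding diameter_def using assms by (intro graph_iso_K2) simp

lemma cyclic_class_vertex_unique:
  assumes "k < 1 + m" "x < 2 * m"
  shows "\<exists>!B. B \<in> cyclic_class m k \<and> x \<in> fst B"
proof (cases k)
  case 0
  have "x \<in> fst (diameter m i) \<longleftrightarrow> i = x mod m" if "i < m" for i
    using mod_eq_iff_antipodal[OF that assms(2)] by (auto simp: diameter_def)
  moreover have "x mod m < m"
    using assms(2) by simp
  ultimately have block_iff: "B \<in> cyclic_class m k \<and> x \<in> fst B \<longleftrightarrow> B = diameter m (x mod m)" for B
    using 0 by (auto simp: cyclic_class_def)
  show ?thesis
    unfolding block_iff by simp
next
  case (Suc j)
  then have "j < m"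
    using assms(1) by simp
  then have block_iff: "B \<in> cyclic_class m k \<and> x \<in> fst B \<longleftrightarrow>
      B = (if x \<in> fst (out_star m j) then out_star m j else out_star m (m + j))" for B
    using Suc antipodal_out_stars_partition[OF _ assms(2)] by (auto simp: cyclic_class_def)
  show ?thesis
    unfolding block_iff by simp
qed

lemma out_star_edge_centre_unique:
  assumes "c < 2 * m" "c' < 2 * m" "e \<in> snd (out_star m c)" "e \<in> snd (out_star m c')"
  shows "c = c'"
proof (rule ccontr)
  assume "c \<noteq> c'"
  obtain w w' where w: "w \<in> cyclic_successors m c" "e = {c, w}"
    and w': "w' \<in> cyclic_successors m c'" "e = {c', w'}"
    using assms(3,4) by (auto simp: out_star_def)
  with \<open>c \<noteq> c'\<close> have "c' \<in> cyclic_successors m c" "c \<in> cyclic_successors m c'"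
    by (auto simp: doubleton_eq_iff)
  then show False
    using cyclic_successors_asym[OF assms(1,2)] by blast
qed

lemma diameter_not_out_star_edge:
  assumes "c < 2 * m" "e \<in> snd (out_star m c)"
  shows "e \<notin> snd (diameter m i)"
proof -
  obtain w where w: "w \<in> cyclic_successors m c" "e = {c, w}"
    using assms(2) by (auto simp: out_star_def)
  then have "w \<noteq> c + m" "c \<noteq> w + m"
    using cyclic_successor_not_antipodal(3,4)[OF assms(1)] by auto
  then show ?thesis
    using w(2) by (auto simp: diameter_def doubleton_eq_iff add.commute)
qed

lemma cyclic_class_edge_unique:
  assumes p: "fst p < 1 + m" "snd p \<in> cyclic_class m (fst p)" "e \<in> snd (snd p)"
    and q: "fst q < 1 + m" "snd q \<in> cyclic_class m (fst q)" "e \<in> snd (snd q)"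
  shows "p = q"
  using p(2) q(2) unfolding mem_cyclic_class[OF p(1)] mem_cyclic_class[OF q(1)]
proof (elim disjE conjE exE)
  fix i i' assume "fst p = 0" "i < m" "snd p = diameter m i" "fst q = 0" "i' < m" "snd q = diameter m i'"
  then show "p = q"
    using p(3) q(3) by (auto simp: diameter_def doubleton_eq_iff prod_eq_iff)
next
  fix i c assume "snd p = diameter m i" "c < 2 * m" "snd q = out_star m c"
  then show "p = q"
    using p(3) q(3) diameter_not_out_star_edge[of c m e i] by simp
next
  fix i c assume "snd q = diameter m i" "c < 2 * m" "snd p = out_star m c"
  then show "p = q"
    using p(3) q(3) diameter_not_out_star_edge[of c m e i] by simp
next
  fix c c' assume "c < 2 * m" "fst p = Suc (c mod m)" "snd p = out_star m c"
    "c' < 2 * m" "fst q = Suc (c' mod m)" "snd q = out_star m c'"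
  then show "p = q"
    using p(3) q(3) out_star_edge_centre_unique by (metis prod_eq_iff)
qed

lemma cyclic_class_edge_exists:
  assumes "a < 2 * m" "b < 2 * m" "a \<noteq> b"
  shows "\<exists>p. fst p < 1 + m \<and> snd p \<in> cyclic_class m (fst p) \<and> {a, b} \<in> snd (snd p)"
proof (cases "b = a + m \<or> a = b + m")
  case True
  then have "min a b < m" "{a, b} = {min a b, m + min a b}"
    using assms by auto
  then show ?thesis
    by (intro exI[of _ "(0, diameter m (min a b))"]) (auto simp: cyclic_class_def diameter_def)
next
  case False
  have out_star_edge: "\<exists>p. fst p < 1 + m \<and> snd p \<in> cyclic_class m (fst p) \<and> {c, w} \<in> snd (snd p)"
    if "c < 2 * m" "w \<in> cyclic_successors m c" for c w
  proof (intro exI[of _ "(Suc (c mod m), out_star m c)"] conjI)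
    show "fst (Suc (c mod m), out_star m c) < 1 + m"
      using that(1) by simp
    then show "snd (Suc (c mod m), out_star m c) \<in> cyclic_class m (fst (Suc (c mod m), out_star m c))"
      using that(1) mem_cyclic_class by auto
  qed (use that(2) in \<open>auto simp: out_star_def\<close>)
  from cyclic_successors_total[OF assms] False
  have "b \<in> cyclic_successors m a \<or> a \<in> cyclic_successors m b"
    by auto
  then show ?thesis
  proof
    assume "b \<in> cyclic_successors m a"
    then show ?thesis
      using out_star_edge[OF assms(1)] by blast
  next
    assume "a \<in> cyclic_successors m b"
    then show ?thesis
      using out_star_edge[OF assms(2)] insert_commute[of a b "{}"] by metis
  qed
qed

theorem URD_K2_star_cyclic: "URD K2 (star (m - 1)) (2 * m) 1 m"
  unfolding URD_def
proof (intro exI[of _ "cyclic_class m"] conjI allI ballI impI)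
  fix k B assume k: "k < 1 + m" and "B \<in> cyclic_class m k"
  then have "(\<exists>i<m. B = diameter m i) \<or> (\<exists>c<2 * m. B = out_star m c)"
    unfolding mem_cyclic_class[OF k] by blast
  then show "is_graph B" "fst B \<subseteq> {..<2 * m}"
    using diameter_subgraph out_star_subgraph by metis+
next
  fix k x assume "k < 1 + m" "x < 2 * m"
  then show "\<exists>!B. B \<in> cyclic_class m k \<and> x \<in> fst B"
    by (rule cyclic_class_vertex_unique)
next
  fix k B assume "k < 1" "B \<in> cyclic_class m k"
  then show "graph_iso B K2"
    using graph_iso_diameter by (auto simp: cyclic_class_def)
next
  fix k B assume k: "1 \<le> k \<and> k < 1 + m" and "B \<in> cyclic_class m k"
  then have "\<exists>c<2 * m. B = out_star m c"
    unfolding mem_cyclic_class[OF conjunct2[OF k]] by auto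
  then show "graph_iso B (star (m - 1))"
    using graph_iso_out_star by auto
next
  fix e assume "e \<in> snd (complete_graph (2 * m))"
  then obtain a b where "a < 2 * m" "b < 2 * m" "a \<noteq> b" "e = {a, b}"
    unfolding complete_graph_def pair_edges_def by (auto simp: card_2_iff)
  then show "\<exists>!p. fst p < 1 + m \<and> snd p \<in> cyclic_class m (fst p) \<and> e \<in> snd (snd p)"
    using cyclic_class_edge_exists cyclic_class_edge_unique by blast
qed

(* The construction works for every n. *)
theorem lemma11:
  fixes n v :: nat
  assumes "n \<ge> 3" and "odd n" and "v = 2 * (n + 1)"
  shows "\<exists>s. URD K2 (star n) v 1 s"
  using URD_K2_star_cyclic[of "n + 1"] assms(3) by auto

end
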